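(* Reduction Rule 1 is safe: if \((G',k')\) is obtained from an instance \((G,k)\) of Vertex Cover by applying Reduction Rule 1, then \(k'+MM(G')-2LP(G')\leq k+MM(G)-2LP(G)\).
   Context: All graphs are finite, undirected and simple. An instance of Vertex Cover is a pair \((G,k)\), \(k\in\mathbb{N}\). \(MM(G)\) is the size of a maximum matching. \(LPVC(G)\) is the LP: minimize \(\sum_v x_v\) subject to \(x_u+x_v\ge1\) for each edge \(\{u,v\}\) and \(0\le x_v\le1\); \(LP(G)\) is its optimum value. For a half-integral solution \(x\) (values in \(\{0,\frac12,1\}\)), \(V_i^x=\{v: x_v=i\}\). Reduction Rule 1 (applied when the all-\(\frac12\) assignment is not the unique optimum of \(LPVC(G)\)): compute an optimal half-integral solution \(x\) to \(LPVC(G)\) such that the all-\(\frac12\) assignment is the unique optimum solution to \(LPVC(G[V_{1/2}^x])\), and set \(G'=G[V_{1/2}^x]\), \(k'=k-|V_1^x|\). *)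

theory Defs
  imports Complex_Main
begin

definition simple_graph :: "'a set \<Rightarrow> 'a set set \<Rightarrow> bool" where
  "simple_graph V E \<longleftrightarrow> finite V \<and>
     (\<forall>e\<in>E. \<exists>u v. e = {u, v} \<and> u \<noteq> v \<and> u \<in> V \<and> v \<in> V)"

definition is_matching :: "'a set set \<Rightarrow> 'a set set \<Rightarrow> bool" where
  "is_matching E M \<longleftrightarrow> M \<subseteq> E \<and> (\<forall>e1\<in>M. \<forall>e2\<in>M. e1 \<noteq> e2 \<longrightarrow> e1 \<inter> e2 = {})"

definition MM :: "'a set set \<Rightarrow> nat" where
  "MM E = Max (card ` {M. is_matching E M})"

definition lp_feasible :: "'a set \<Rightarrow> 'a set set \<Rightarrow> ('a \<Rightarrow> real) \<Rightarrow> bool" where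
  "lp_feasible V E x \<longleftrightarrow>
     (\<forall>u v. {u, v} \<in> E \<longrightarrow> x u + x v \<ge> 1) \<and> (\<forall>v\<in>V. 0 \<le> x v \<and> x v \<le> 1)"

definition LP :: "'a set \<Rightarrow> 'a set set \<Rightarrow> real" where
  "LP V E = Inf {sum x V | x. lp_feasible V E x}"

definition lp_optimal :: "'a set \<Rightarrow> 'a set set \<Rightarrow> ('a \<Rightarrow> real) \<Rightarrow> bool" where
  "lp_optimal V E x \<longleftrightarrow> lp_feasible V E x \<and>
     (\<forall>y. lp_feasible V E y \<longrightarrow> sum x V \<le> sum y V)"

definition half_unique_opt :: "'a set \<Rightarrow> 'a set set \<Rightarrow> bool" where
  "half_unique_opt V E \<longleftrightarrow> lp_optimal V E (\<lambda>_. 1/2) \<and>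
     (\<forall>y. lp_optimal V E y \<longrightarrow> (\<forall>v\<in>V. y v = 1/2))"

definition half_integral :: "'a set \<Rightarrow> ('a \<Rightarrow> real) \<Rightarrow> bool" where
  "half_integral V x \<longleftrightarrow> (\<forall>v\<in>V. x v \<in> {0, 1/2, 1})"

definition level_set :: "'a set \<Rightarrow> ('a \<Rightarrow> real) \<Rightarrow> real \<Rightarrow> 'a set" where
  "level_set V x i = {v\<in>V. x v = i}"

definition induced_edges :: "'a set set \<Rightarrow> 'a set \<Rightarrow> 'a set set" where
  "induced_edges E S = {e\<in>E. e \<subseteq> S}"

end

theory Submission
  imports Defs
begin

text \<open>
  Let \<open>V0, V1, Vh\<close> be the level sets of the half-integral optimum \<open>x\<close> at \<open>0, 1, 1/2\<close>.
  Since \<open>LP(G) = |V1| + |Vh|/2\<close> and \<open>LP(G') = |Vh|/2\<close>, the claim reduces to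
  \<open>MM(G') + |V1| \<le> MM(G)\<close>. Every \<open>S \<subseteq> V1\<close> has at least \<open>|S|\<close> neighbours in \<open>V0\<close>:
  otherwise resetting \<open>S\<close> and these neighbours to \<open>1/2\<close> would give a cheaper feasible
  solution. By Hall's theorem \<open>V1\<close> is matched into \<open>V0\<close>, and this matching is
  vertex-disjoint from any matching of \<open>G' = G[Vh]\<close>.
\<close>

definition hall_condition :: "'i set \<Rightarrow> ('i \<Rightarrow> 'b set) \<Rightarrow> bool" where
  "hall_condition A N \<longleftrightarrow> (\<forall>S\<subseteq>A. card S \<le> card (\<Union>(N ` S)))"

definition has_SDR :: "'i set \<Rightarrow> ('i \<Rightarrow> 'b set) \<Rightarrow> bool" where
  "has_SDR A N \<longleftrightarrow> (\<exists>f. inj_on f A \<and> (\<forall>a\<in>A. f a \<in> N a))"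

lemma has_SDR_extend:
  assumes "S \<subseteq> A" and g: "inj_on g S" "\<forall>a\<in>S. g a \<in> N a"
    and "has_SDR (A - S) (\<lambda>a. N a - g ` S)"
  shows "has_SDR A N"
proof -
  obtain h where h: "inj_on h (A - S)" "\<forall>a\<in>A - S. h a \<in> N a - g ` S"
    using assms(4) unfolding has_SDR_def by blast
  define f where "f a = (if a \<in> S then g a else h a)" for a
  have "inj_on f A"
  proof (rule inj_onI)
    fix a a' assume "a \<in> A" "a' \<in> A" "f a = f a'"
    moreover have "g a \<noteq> h a'" if "a \<in> S" "a' \<in> A - S" for a a'
      using h(2) that by (metis DiffD2 imageI)
    ultimately show "a = a'"
      using g(1) h(1) unfolding f_def inj_on_def by (cases "a \<in> S"; cases "a' \<in> S") (auto dest: sym)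
  qed
  then show ?thesis
    unfolding has_SDR_def using g(2) h(2) by (auto simp: f_def)
qed

lemma hall_condition_Diff_tight:
  assumes "finite A" "\<forall>a\<in>A. finite (N a)" "hall_condition A N"
    and "S \<subseteq> A" and tight: "card S = card (\<Union>(N ` S))"
  shows "hall_condition (A - S) (\<lambda>a. N a - \<Union>(N ` S))"
  unfolding hall_condition_def
proof (intro allI impI)
  fix T assume T: "T \<subseteq> A - S"
  let ?U = "\<Union>(N ` S)" and ?W = "\<Union>(N ` (T \<union> S))"
  have TS: "T \<union> S \<subseteq> A" using T \<open>S \<subseteq> A\<close> by blast
  then have fin: "finite T" "finite S"
    using assms(1) by (auto intro: finite_subset)
  have finW: "finite ?W"
    using TS assms(2) fin by auto
  have UW: "?U \<subseteq> ?W" by blast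
  have "card T + card S = card (T \<union> S)"
    using T fin(1,2) by (intro card_Un_disjoint[symmetric]) auto
  also have "\<dots> \<le> card ?W"
    using assms(3) TS unfolding hall_condition_def by blast
  also have "\<dots> = card (?W - ?U) + card ?U"
    using card_Diff_subset[OF finite_subset[OF UW finW] UW] card_mono[OF finW UW] by linarith
  finally have "card T \<le> card (?W - ?U)" using tight by linarith
  moreover have "?W - ?U = \<Union>((\<lambda>a. N a - ?U) ` T)" by blast
  ultimately show "card T \<le> card (\<Union>((\<lambda>a. N a - ?U) ` T))" by simp
qed

lemma hall_condition_Diff_slack:
  assumes slack: "\<forall>T\<subseteq>A. T \<noteq> {} \<longrightarrow> T \<noteq> A \<longrightarrow> card T < card (\<Union>(N ` T))"
    and "a \<in> A"
  shows "hall_condition (A - {a}) (\<lambda>x. N x - {b})"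
  unfolding hall_condition_def
proof (intro allI impI)
  fix T assume T: "T \<subseteq> A - {a}"
  show "card T \<le> card (\<Union>((\<lambda>x. N x - {b}) ` T))"
  proof (cases "T = {}")
    case False
    then have "card T < card (\<Union>(N ` T))" using slack T \<open>a \<in> A\<close> by blast
    moreover have "card (\<Union>(N ` T)) - 1 \<le> card (\<Union>(N ` T) - {b})"
      by (simp add: card_Diff_singleton_if)
    moreover have "\<Union>((\<lambda>x. N x - {b}) ` T) = \<Union>(N ` T) - {b}" by blast
    ultimately show ?thesis by arith
  qed simp
qed

lemma has_SDR_mono:
  assumes "has_SDR A N" "\<forall>a\<in>A. N a \<subseteq> N' a"
  shows "has_SDR A N'"
  using assms unfolding has_SDR_def by blast

theorem hall_marriage:
  fixes A :: "'i set" and N :: "'i \<Rightarrow> 'b set"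
  assumes "finite A" "\<forall>a\<in>A. finite (N a)" "hall_condition A N"
  shows "has_SDR A N"
  using assms
proof (induction "card A" arbitrary: A N rule: less_induct)
  \<comment> \<open>Halmos--Vaughan: split off a tight proper subset if there is one; otherwise
    match an arbitrary element, the slack absorbing the loss of its partner.\<close>
  case less
  note fin = less.prems(1,2) and hall = less.prems(3)
  have IH: "has_SDR B M" if "B \<subset> A" "\<forall>a\<in>B. finite (M a)" "hall_condition B M" for B and M :: "'i \<Rightarrow> 'b set"
    using that fin(1) by (intro less.hyps) (auto intro: psubset_card_mono finite_subset)
  show ?case
  proof (cases "\<exists>S\<subseteq>A. S \<noteq> {} \<and> S \<noteq> A \<and> card S = card (\<Union>(N ` S))")
    case True
    then obtain S where S: "S \<subseteq> A" "S \<noteq> {}" "S \<noteq> A" and tight: "card S = card (\<Union>(N ` S))"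
      by blast
    have "has_SDR S N"
      using S fin(2) hall by (intro IH) (auto simp: hall_condition_def)
    then obtain g where g: "inj_on g S" "\<forall>a\<in>S. g a \<in> N a"
      unfolding has_SDR_def by blast
    have "has_SDR (A - S) (\<lambda>a. N a - \<Union>(N ` S))"
      using S fin(2) hall_condition_Diff_tight[OF fin hall S(1) tight] by (intro IH) auto
    then have "has_SDR (A - S) (\<lambda>a. N a - g ` S)"
      by (rule has_SDR_mono) (use g(2) in blast)
    then show ?thesis using has_SDR_extend[OF S(1) g] by blast
  next
    case False
    then have slack: "\<forall>T\<subseteq>A. T \<noteq> {} \<longrightarrow> T \<noteq> A \<longrightarrow> card T < card (\<Union>(N ` T))"
      using hall unfolding hall_condition_def by (meson order_le_imp_less_or_eq)
    show ?thesis
    proof (cases "A = {}")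
      case False
      then obtain a where a: "a \<in> A" by blast
      have "card {a} \<le> card (N a)" using hall a unfolding hall_condition_def by force
      then obtain b where b: "b \<in> N a" by fastforce
      have "has_SDR (A - {a}) (\<lambda>x. N x - {b})"
        using a fin(2) hall_condition_Diff_slack[OF slack a] by (intro IH) auto
      then show ?thesis
        using has_SDR_extend[of "{a}" A "\<lambda>_. b" N] a b by simp
    qed (simp add: has_SDR_def)
  qed
qed

lemma LP_eq_sum_if_lp_optimal:
  assumes "lp_optimal V E y"
  shows "LP V E = sum y V"
  unfolding LP_def
proof (rule cInf_eq_minimum)
  show "sum y V \<in> {sum x V |x. lp_feasible V E x}"
    using assms unfolding lp_optimal_def by auto
next
  fix z assume "z \<in> {sum x V |x. lp_feasible V E x}"
  then show "sum y V \<le> z"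
    using assms unfolding lp_optimal_def by auto
qed

lemma sum_half_integral:
  assumes "finite V" "half_integral V x"
  shows "sum x V = card (level_set V x 1) + card (level_set V x (1/2)) / 2"
proof -
  let ?V1 = "level_set V x 1" and ?Vh = "level_set V x (1/2)"
  have "sum x V = sum x (?V1 \<union> ?Vh)"
    using assms by (intro sum.mono_neutral_right) (auto simp: level_set_def half_integral_def)
  also have "\<dots> = sum x ?V1 + sum x ?Vh"
    using assms(1) by (intro sum.union_disjoint) (auto simp: level_set_def)
  also have "sum x ?Vh = sum (\<lambda>_. 1/2) ?Vh"
    by (rule sum.cong) (simp_all add: level_set_def)
  also have "sum x ?V1 = sum (\<lambda>_. 1) ?V1"
    by (rule sum.cong) (simp_all add: level_set_def)
  also have "(\<Sum>_\<in>?V1. 1) + (\<Sum>_\<in>?Vh. 1/2) = card ?V1 + card ?Vh / (2::real)"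
    by simp
  finally show ?thesis .
qed

lemma simple_graph_edge_in_vertices:
  assumes "simple_graph V E" "{u, v} \<in> E"
  shows "u \<in> V" "v \<in> V"
  using assms unfolding simple_graph_def by (metis doubleton_eq_iff)+

lemma simple_graph_finite_edges:
  assumes "simple_graph V E"
  shows "finite E"
proof -
  have "E \<subseteq> Pow V" using assms unfolding simple_graph_def by auto
  moreover have "finite (Pow V)" using assms unfolding simple_graph_def by simp
  ultimately show ?thesis by (rule finite_subset)
qed

definition zero_neighbours :: "'a set \<Rightarrow> 'a set set \<Rightarrow> ('a \<Rightarrow> real) \<Rightarrow> 'a \<Rightarrow> 'a set" where
  "zero_neighbours V E x v = {w \<in> level_set V x 0. {v, w} \<in> E}"

lemma lp_feasible_shift_to_half:
  assumes graph: "simple_graph V E" and feas: "lp_feasible V E x" and half: "half_integral V x"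
    and S: "S \<subseteq> level_set V x 1"
  defines "T \<equiv> \<Union>(zero_neighbours V E x ` S)"
  shows "lp_feasible V E (\<lambda>w. if w \<in> S \<union> T then 1/2 else x w)"
proof -
  define y where "y = (\<lambda>w. if w \<in> S \<union> T then 1/2 else x w)"
  have S1: "x w = 1" if "w \<in> S" for w
    using S that by (auto simp: level_set_def)
  have T0: "x w = 0" if "w \<in> T" for w
    using that by (auto simp: T_def zero_neighbours_def level_set_def)
  have y_ge_x: "x w \<le> y w" if "w \<notin> S" for w
    using that T0 by (auto simp: y_def)
  have y_half: "1/2 \<le> y v" if "{u, v} \<in> E" "u \<in> S" for u v
  proof (cases "v \<in> S \<union> T")
    case False
    have "v \<in> V" using simple_graph_edge_in_vertices[OF graph that(1)] by simp
    moreover have "x v \<noteq> 0"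
      using False \<open>v \<in> V\<close> that by (auto simp: T_def zero_neighbours_def level_set_def)
    ultimately have "1/2 \<le> x v" using half by (auto simp: half_integral_def)
    then show ?thesis using False by (simp add: y_def)
  qed (simp add: y_def)
  have "1 \<le> y u + y v" if e: "{u, v} \<in> E" for u v
  proof -
    have e': "{v, u} \<in> E" using e by (simp add: insert_commute)
    consider "u \<in> S" | "v \<in> S" | "u \<notin> S" "v \<notin> S" by blast
    then show ?thesis
    proof cases
      case 1 then show ?thesis using y_half[OF e] by (simp add: y_def)
    next
      case 2 then show ?thesis using y_half[OF e'] by (simp add: y_def)
    next
      case 3
      have "1 \<le> x u + x v" using feas e unfolding lp_feasible_def by blast
      then show ?thesis using y_ge_x[OF 3(1)] y_ge_x[OF 3(2)] by linarith
    qed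
  qed
  moreover have "0 \<le> y v \<and> y v \<le> 1" if "v \<in> V" for v
    using feas that unfolding lp_feasible_def y_def by auto
  ultimately have "lp_feasible V E y" unfolding lp_feasible_def by blast
  then show ?thesis by (simp only: y_def)
qed

lemma sum_shift_to_half:
  fixes x :: "'a \<Rightarrow> real"
  assumes "finite V" "S \<subseteq> V" "T \<subseteq> V" "\<forall>w\<in>S. x w = 1" "\<forall>w\<in>T. x w = 0"
  shows "sum (\<lambda>w. if w \<in> S \<union> T then 1/2 else x w) V = sum x V - card S / 2 + card T / 2"
proof -
  let ?y = "\<lambda>w. if w \<in> S \<union> T then 1/2 else x w" and ?R = "V - (S \<union> T)"
  have fin: "finite S" "finite T" using assms(1-3) finite_subset by blast+
  have disj: "S \<inter> T = {}" using assms(4,5) by fastforce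
  have split: "sum f V = sum f ?R + (sum f S + sum f T)" for f :: "'a \<Rightarrow> real"
  proof -
    have "sum f V = sum f ?R + sum f (S \<union> T)"
      using assms(1-3) by (intro sum.subset_diff) auto
    also have "sum f (S \<union> T) = sum f S + sum f T"
      using fin disj by (rule sum.union_disjoint)
    finally show ?thesis .
  qed
  have "sum ?y ?R = sum x ?R" by (rule sum.cong) auto
  moreover have "sum ?y S = sum (\<lambda>_. 1/2) S" "sum ?y T = sum (\<lambda>_. 1/2) T"
    by (rule sum.cong; simp)+
  moreover have "sum x S = sum (\<lambda>_. 1) S" "sum x T = sum (\<lambda>_. 0) T"
    using assms(4,5) by (auto intro: sum.cong)
  ultimately show ?thesis using split[of ?y] split[of x] by simp
qed

lemma hall_condition_zero_neighbours:
  assumes graph: "simple_graph V E" and x_opt: "lp_optimal V E x" and half: "half_integral V x"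
  shows "hall_condition (level_set V x 1) (zero_neighbours V E x)"
  unfolding hall_condition_def
proof (intro allI impI)
  fix S assume S: "S \<subseteq> level_set V x 1"
  let ?T = "\<Union>(zero_neighbours V E x ` S)"
  let ?y = "\<lambda>w. if w \<in> S \<union> ?T then 1/2 else x w"
  have feas: "lp_feasible V E x" using x_opt unfolding lp_optimal_def by blast
  have "sum x V \<le> sum ?y V"
    using x_opt lp_feasible_shift_to_half[OF graph feas half S] unfolding lp_optimal_def by blast
  also have "\<dots> = sum x V - card S / 2 + card ?T / 2"
    using graph S by (intro sum_shift_to_half)
      (auto simp: simple_graph_def zero_neighbours_def level_set_def)
  finally show "card S \<le> card ?T" by simp
qed

lemma finite_matchings: "finite E \<Longrightarrow> finite {M. is_matching E M}"
  by (rule finite_subset[of _ "Pow E"]) (auto simp: is_matching_def)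

lemma card_le_MM: "finite E \<Longrightarrow> is_matching E M \<Longrightarrow> card M \<le> MM E"
  unfolding MM_def using finite_matchings by (intro Max_ge) auto

lemma MM_attained:
  assumes "finite E"
  obtains M where "is_matching E M" "card M = MM E"
proof -
  have "is_matching E {}" by (simp add: is_matching_def)
  then have "MM E \<in> card ` {M. is_matching E M}"
    unfolding MM_def using finite_matchings[OF assms] by (intro Max_in) auto
  then obtain M where "is_matching E M" "MM E = card M" by blast
  then show ?thesis using that by simp
qed

lemma is_matching_Un:
  assumes "is_matching E M1" "is_matching E M2" "\<Union>M1 \<inter> \<Union>M2 = {}"
  shows "is_matching E (M1 \<union> M2)"
  unfolding is_matching_def
proof (intro conjI ballI impI)
  show "M1 \<union> M2 \<subseteq> E" using assms(1,2) by (simp add: is_matching_def)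
next
  fix e1 e2 assume "e1 \<in> M1 \<union> M2" "e2 \<in> M1 \<union> M2" "e1 \<noteq> e2"
  moreover have "e \<inter> e' = {}" if "e \<in> M1" "e' \<in> M2" for e e'
    using assms(3) that by blast
  ultimately show "e1 \<inter> e2 = {}"
    using assms(1,2) unfolding is_matching_def by (metis Int_commute Un_iff)
qed

lemma is_matching_star:
  assumes "inj_on f B" "f ` B \<inter> B = {}" "\<forall>v\<in>B. {v, f v} \<in> E"
  shows "is_matching E ((\<lambda>v. {v, f v}) ` B)"
  unfolding is_matching_def
proof (intro conjI ballI impI)
  show "(\<lambda>v. {v, f v}) ` B \<subseteq> E" using assms(3) by blast
next
  fix e1 e2 assume "e1 \<in> (\<lambda>v. {v, f v}) ` B" "e2 \<in> (\<lambda>v. {v, f v}) ` B" "e1 \<noteq> e2"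
  then obtain v w where vw: "v \<in> B" "w \<in> B" "v \<noteq> w" "e1 = {v, f v}" "e2 = {w, f w}"
    by blast
  have "f v \<noteq> f w" using assms(1) vw(1-3) by (meson inj_onD)
  moreover have "f v \<notin> B" "f w \<notin> B" using assms(2) vw(1,2) by blast+
  ultimately show "e1 \<inter> e2 = {}" using vw by auto
qed

lemma card_star:
  assumes "f ` B \<inter> B = {}"
  shows "card ((\<lambda>v. {v, f v}) ` B) = card B"
proof (rule card_image, rule inj_onI)
  fix v w assume "v \<in> B" "w \<in> B" "{v, f v} = {w, f w}"
  moreover have "v \<noteq> f w" using assms \<open>v \<in> B\<close> \<open>w \<in> B\<close> by blast
  ultimately show "v = w" by (auto simp: doubleton_eq_iff)
qed

lemma MM_induced_add_card_le:
  assumes "finite E" "inj_on f B" "f ` B \<inter> B = {}" "\<forall>v\<in>B. {v, f v} \<in> E"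
    and "(B \<union> f ` B) \<inter> C = {}"
  shows "MM (induced_edges E C) + card B \<le> MM E"
proof -
  have "finite (induced_edges E C)" using assms(1) by (simp add: induced_edges_def)
  then obtain M where M: "is_matching (induced_edges E C) M" "card M = MM (induced_edges E C)"
    using MM_attained by blast
  let ?star = "(\<lambda>v. {v, f v}) ` B"
  have M_E: "is_matching E M" and M_C: "\<Union>M \<subseteq> C"
    using M(1) by (auto simp: is_matching_def induced_edges_def)
  have star: "is_matching E ?star" "\<Union>?star = B \<union> f ` B"
    using is_matching_star[OF assms(2-4)] by auto
  have disj: "\<Union>M \<inter> \<Union>?star = {}" unfolding star(2) using M_C assms(5) by blast
  then have "M \<inter> ?star = {}" by blast
  moreover have "finite M" "finite ?star"
    using M_E star(1) assms(1) by (auto simp: is_matching_def intro: finite_subset)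
  ultimately have "card M + card ?star = card (M \<union> ?star)" by (simp add: card_Un_disjoint)
  also have "\<dots> \<le> MM E" using card_le_MM[OF assms(1) is_matching_Un[OF M_E star(1) disj]] .
  finally show ?thesis using M(2) card_star[OF assms(3)] by simp
qed

theorem lemma7:
  fixes V :: "'a set" and E :: "'a set set" and k :: nat and x :: "'a \<Rightarrow> real"
    and V' :: "'a set" and E' :: "'a set set" and k' :: int
  assumes graph: "simple_graph V E"
    and applicable: "\<not> half_unique_opt V E"
    and x_opt: "lp_optimal V E x"
    and x_half: "half_integral V x"
    and V'_def: "V' = level_set V x (1/2)"
    and E'_def: "E' = induced_edges E V'"
    and x_rest: "half_unique_opt V' E'"
    and k'_def: "k' = int k - int (card (level_set V x 1))"
  shows "real_of_int k' + real (MM E') - 2 * LP V' E' \<le> real k + real (MM E) - 2 * LP V E"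
proof -
  let ?V1 = "level_set V x 1"
  have finV: "finite V" using graph unfolding simple_graph_def by blast
  have LP_G: "LP V E = card ?V1 + card V' / 2"
    using LP_eq_sum_if_lp_optimal[OF x_opt] sum_half_integral[OF finV x_half] V'_def by simp
  have LP_G': "LP V' E' = card V' / 2"
    using x_rest LP_eq_sum_if_lp_optimal[of V' E' "\<lambda>_. 1/2"] unfolding half_unique_opt_def by simp
  have "has_SDR ?V1 (zero_neighbours V E x)"
    using finV hall_condition_zero_neighbours[OF graph x_opt x_half]
    by (intro hall_marriage) (auto simp: level_set_def zero_neighbours_def)
  then obtain f where f: "inj_on f ?V1" "\<forall>v\<in>?V1. f v \<in> zero_neighbours V E x v"
    unfolding has_SDR_def by blast
  have "MM E' + card ?V1 \<le> MM E"
    unfolding E'_def V'_def using f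
    by (intro MM_induced_add_card_le[OF simple_graph_finite_edges[OF graph]])
      (auto simp: zero_neighbours_def level_set_def)
  then show ?thesis using LP_G LP_G' k'_def by simp
qed

end
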